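(* Fix an even integer $k\ge2$ and variables $X_{i,j}$ for $i\in\{1,\ldots,k\}$, $j\in\{1,\ldots,k/2\}$. Let $$Q = R(X_{1,1},\ldots,X_{k,k/2}) \leftarrow \bigwedge_{j=1}^{k/2} R_j(X_{1,j},\ldots,X_{k,j}) \wedge \bigwedge_{i=1}^{k} T_i(X_{i,1},\ldots,X_{i,k/2}),$$ where the head contains all $k^2/2$ variables, with the functional dependencies: for each $j\in\{1,\ldots,k/2\}$, each subset $S\subseteq\{X_{1,j},\ldots,X_{k,j}\}$ with $|S|\ge k/2$, and each $i\in\{1,\ldots,k\}$, the dependency $S\to X_{i,j}$ (holding on relation $R_j$). Then $C(Q)\le 2$.
   Context: Valid coloring: a map $\mathcal{L}$ assigning to each query variable $X$ a finite set $\mathcal{L}(X)$ of colors such that for every functional dependency $Y_1,\ldots,Y_j\to Y$ among query variables, $\mathcal{L}(Y)\subseteq\bigcup_i\mathcal{L}(Y_i)$. Color number of a query with head list $u_0$ and body atoms with variable lists $u_1,\ldots,u_m$: $C(Q)=\max_{\mathcal{L}} \frac{|\bigcup_{X\in u_0}\mathcal{L}(X)|}{\max_{i\ge1}|\bigcup_{X\in u_i}\mathcal{L}(X)|}$, the maximum over valid colorings with positive denominator. *)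

theory Defs
  imports Complex_Main "HOL-Library.Extended_Real"
begin

text \<open>A conjunctive query is given by its head variable list, the variable lists of its
body atoms, and a set of functional dependencies (S, Y) meaning S \<rightarrow> Y.
Colors are natural numbers (any finite color sets can be renamed into nat).\<close>

definition valid_coloring ::
  "'v set \<Rightarrow> ('v set \<times> 'v) set \<Rightarrow> ('v \<Rightarrow> nat set) \<Rightarrow> bool" where
  "valid_coloring V fds L \<longleftrightarrow>
     (\<forall>X\<in>V. finite (L X)) \<and> (\<forall>(S, Y)\<in>fds. L Y \<subseteq> (\<Union>X\<in>S. L X))"

definition colors_of :: "('v \<Rightarrow> nat set) \<Rightarrow> 'v list \<Rightarrow> nat" where
  "colors_of L u = card (\<Union>X\<in>set u. L X)"

definition body_max :: "('v \<Rightarrow> nat set) \<Rightarrow> 'v list list \<Rightarrow> nat" where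
  "body_max L body = Max ((\<lambda>u. colors_of L u) ` set body)"

definition color_number ::
  "'v set \<Rightarrow> 'v list \<Rightarrow> 'v list list \<Rightarrow> ('v set \<times> 'v) set \<Rightarrow> ereal" where
  "color_number V head body fds =
     Sup {ereal (real (colors_of L head) / real (body_max L body)) | L.
            valid_coloring V fds L \<and> body_max L body > 0}"

definition qvars :: "nat \<Rightarrow> (nat \<times> nat) set" where
  "qvars k = {1..k} \<times> {1..k div 2}"

definition qhead :: "nat \<Rightarrow> (nat \<times> nat) list" where
  "qhead k = [(i, j). i \<leftarrow> [1..<k+1], j \<leftarrow> [1..<k div 2 + 1]]"

definition qbody :: "nat \<Rightarrow> (nat \<times> nat) list list" where
  "qbody k = [[(i, j). i \<leftarrow> [1..<k+1]]. j \<leftarrow> [1..<k div 2 + 1]]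
           @ [[(i, j). j \<leftarrow> [1..<k div 2 + 1]]. i \<leftarrow> [1..<k+1]]"

definition qfds :: "nat \<Rightarrow> ((nat \<times> nat) set \<times> (nat \<times> nat)) set" where
  "qfds k = {(S, (i, j)) | S i j. j \<in> {1..k div 2} \<and> i \<in> {1..k} \<and>
              S \<subseteq> {1..k} \<times> {j} \<and> card S \<ge> k div 2}"

end

theory Submission
  imports Defs
begin

(* Write k = 2m and fix a valid coloring L.  Let R_i be the set of colors of row i
   (the atom T_i) and U the set of all colors (the head).  In column j, any m cells functionally
   determine every cell of the column; hence a color occurring in column j is missing from fewer
   than m of its k = 2m cells, i.e. it occurs in at least m + 1 rows.  Double counting the pairs
   (color, row containing it) gives  |U| (m + 1) <= sum_i |R_i| <= 2m M,  where M bounds the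
   number of colors of each body atom; hence |U| <= 2M and the color number is at most 2. *)

lemma card_mult_le_sum_card:
  fixes R :: "'i \<Rightarrow> 'a set"
  assumes "finite U" "finite I" and sub: "\<And>i. i \<in> I \<Longrightarrow> R i \<subseteq> U"
    and many: "\<And>c. c \<in> U \<Longrightarrow> t \<le> card {i\<in>I. c \<in> R i}"
  shows "card U * t \<le> (\<Sum>i\<in>I. card (R i))"
proof -
  have "card U * t = (\<Sum>c\<in>U. t)" by simp
  also have "\<dots> \<le> (\<Sum>c\<in>U. card {i\<in>I. c \<in> R i})" by (rule sum_mono) (rule many)
  also have "\<dots> = (\<Sum>c\<in>U. \<Sum>i\<in>I. if c \<in> R i then 1 else 0)"
    using \<open>finite I\<close> by (simp add: sum.If_cases Int_def conj_commute)
  also have "\<dots> = (\<Sum>i\<in>I. \<Sum>c\<in>U. if c \<in> R i then 1 else 0)" by (rule sum.swap)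
  also have "\<dots> = (\<Sum>i\<in>I. card (R i))"
    using \<open>finite U\<close> sub by (intro sum.cong) (auto simp: sum.If_cases Int_absorb1)
  finally show ?thesis .
qed

lemma dependency_spreads_color:
  fixes L :: "'v \<Rightarrow> 'c set"
  assumes "finite C"
    and dep: "\<And>S Y. S \<subseteq> C \<Longrightarrow> t \<le> card S \<Longrightarrow> Y \<in> C \<Longrightarrow> L Y \<subseteq> (\<Union>X\<in>S. L X)"
    and "Y \<in> C" "c \<in> L Y"
  shows "card C < card {X\<in>C. c \<in> L X} + t"
proof -
  define S where "S = {X\<in>C. c \<notin> L X}"
  have "card S < t"
  proof (rule ccontr)
    assume "\<not> card S < t"
    then have "L Y \<subseteq> (\<Union>X\<in>S. L X)" using dep[of S Y] \<open>Y \<in> C\<close> by (auto simp: S_def)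
    then show False using \<open>c \<in> L Y\<close> by (auto simp: S_def)
  qed
  moreover have "card C = card {X\<in>C. c \<in> L X} + card S"
    unfolding S_def using \<open>finite C\<close>
    by (subst card_Un_disjoint[symmetric]) (auto intro!: arg_cong[where f = card])
  ultimately show ?thesis by linarith
qed

lemma colors_of_le_body_max:
  assumes "u \<in> set body"
  shows "colors_of L u \<le> body_max L body"
  unfolding body_max_def using assms by (intro Max_ge) auto

lemma color_number_le:
  assumes "\<And>L. valid_coloring V fds L \<Longrightarrow> 0 < body_max L body \<Longrightarrow>
             real (colors_of L head) \<le> r * real (body_max L body)"
  shows "color_number V head body fds \<le> ereal r"
  unfolding color_number_def
proof (rule Sup_least, clarify)
  fix L assume "valid_coloring V fds L" "0 < body_max L body"
  with assms[of L] show "ereal (real (colors_of L head) / real (body_max L body)) \<le> ereal r"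
    by (simp add: divide_le_eq)
qed

definition row_colors :: "nat \<Rightarrow> (nat \<times> nat \<Rightarrow> nat set) \<Rightarrow> nat \<Rightarrow> nat set" where
  "row_colors k L i = (\<Union>j\<in>{1..k div 2}. L (i, j))"

lemma set_qhead: "set (qhead k) = qvars k"
  unfolding qhead_def qvars_def
  by (auto simp del: upt_Suc simp: atLeastLessThanSuc_atLeastAtMost)

lemma row_colors_le_body_max:
  assumes "i \<in> {1..k}"
  shows "card (row_colors k L i) \<le> body_max L (qbody k)"
proof -
  let ?row = "[(i, j). j \<leftarrow> [1..<k div 2 + 1]]"
  have "set ?row = {i} \<times> {1..k div 2}" by auto
  then have "card (row_colors k L i) = colors_of L ?row"
    unfolding colors_of_def row_colors_def by (auto intro!: arg_cong[where f = card])
  also have "\<dots> \<le> body_max L (qbody k)"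
    using assms by (intro colors_of_le_body_max) (auto simp: qbody_def)
  finally show ?thesis .
qed

text \<open>Column j satisfies the hypothesis of dependency_spreads_color with t = k/2, so a color of
  cell (i0, j) appears in more than k/2 rows.\<close>
lemma color_in_many_rows:
  assumes val: "valid_coloring (qvars k) (qfds k) L"
    and "i0 \<in> {1..k}" "j \<in> {1..k div 2}" "c \<in> L (i0, j)"
  shows "k < card {i\<in>{1..k}. c \<in> row_colors k L i} + k div 2"
proof -
  let ?C = "{1..k} \<times> {j}"
  have dep: "L Y \<subseteq> (\<Union>X\<in>S. L X)" if "S \<subseteq> ?C" "k div 2 \<le> card S" "Y \<in> ?C" for S Y
  proof -
    have "(S, Y) \<in> qfds k" using that \<open>j \<in> {1..k div 2}\<close> unfolding qfds_def by auto
    then show ?thesis using val unfolding valid_coloring_def by auto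
  qed
  have "k = card ?C" by simp
  also have "\<dots> < card {X\<in>?C. c \<in> L X} + k div 2"
    using assms(2,4) by (intro dependency_spreads_color[OF _ dep]) auto
  also have "card {X\<in>?C. c \<in> L X} = card {i\<in>{1..k}. c \<in> L (i, j)}"
    by (rule bij_betw_same_card[of fst]) (auto simp: bij_betw_def inj_on_def image_def)
  also have "\<dots> \<le> card {i\<in>{1..k}. c \<in> row_colors k L i}"
    using \<open>j \<in> {1..k div 2}\<close> by (intro card_mono) (auto simp: row_colors_def)
  finally show ?thesis by simp
qed

lemma head_colors_le_twice_body_max:
  assumes "even k" and val: "valid_coloring (qvars k) (qfds k) L"
  shows "colors_of L (qhead k) \<le> 2 * body_max L (qbody k)"
proof -
  define U where "U = (\<Union>X\<in>qvars k. L X)"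
  define M where "M = body_max L (qbody k)"
  obtain m where k: "k = 2 * m" using \<open>even k\<close> by blast
  have "finite U"
    using val unfolding U_def valid_coloring_def qvars_def by auto
  moreover have "row_colors k L i \<subseteq> U" if "i \<in> {1..k}" for i
    using that unfolding U_def row_colors_def qvars_def by fastforce
  moreover have "m + 1 \<le> card {i\<in>{1..k}. c \<in> row_colors k L i}" if "c \<in> U" for c
    using that color_in_many_rows[OF val] k unfolding U_def qvars_def by fastforce
  ultimately have "card U * (m + 1) \<le> (\<Sum>i\<in>{1..k}. card (row_colors k L i))"
    by (intro card_mult_le_sum_card) auto
  also have "\<dots> \<le> (\<Sum>i\<in>{1..k}. M)"
    by (intro sum_mono) (simp add: M_def row_colors_le_body_max)
  also have "\<dots> \<le> 2 * M * (m + 1)" using k by simp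
  finally have "card U * (m + 1) \<le> 2 * M * (m + 1)" .
  then have "card U \<le> 2 * M" by (metis mult_le_cancel2 add_gr_0 zero_less_one)
  then show ?thesis by (simp add: colors_of_def set_qhead U_def M_def)
qed

theorem mainTheorem5:
  fixes k :: nat
  assumes "even k" and "k \<ge> 2"
  shows "color_number (qvars k) (qhead k) (qbody k) (qfds k) \<le> 2"
proof -
  have "color_number (qvars k) (qhead k) (qbody k) (qfds k) \<le> ereal 2"
    using head_colors_le_twice_body_max[OF \<open>even k\<close>]
    by (intro color_number_le) (metis of_nat_le_iff of_nat_mult of_nat_numeral)
  then show ?thesis by simp
qed

end
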